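(* Let $\mathscr{U}\subset\mathbb{C}^n$ be a bounded (nonempty) monomial polyhedron defined by a matrix $B\in M_n(\mathbb{Q})$. Then, after multiplying each row of $B$ by a suitable positive rational number and possibly interchanging two rows (which does not change $\mathscr{U}$), $\mathscr{U}$ is represented by a matrix $B$ satisfying $B\in M_n(\mathbb{Z})$, $\det B>0$, and $B^{-1}\succeq 0$ (all entries of $B^{-1}$ nonnegative). In particular any representing matrix of a bounded monomial polyhedron is invertible.
   Context: For $B\in M_n(\mathbb{Q})$ with rows $b^j$, the monomial polyhedron defined by $B$ is $\mathscr{U}=\{z\in\mathbb{C}^n: \prod_{k}|z_k|^{b^j_k}<1 \text{ for all } j\}$, where $z$ is excluded if some product is undefined due to division by zero (some $z_k=0$ with $b^j_k<0$). Equivalently, with $\rho(z)=(|z_1|,\dots,|z_n|)^T$ and $r^B=(r^{b^1},\dots,r^{b^n})^T$, $r^{b}=\prod_k r_k^{b_k}$, $\mathscr{U}=\{z: \rho(z)^B \text{ defined and } \rho(z)^B\prec \mathbb{1}^T\}$ with $\prec$ elementwise strict order. $\succeq$ denotes elementwise order. *)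

theory Defs
  imports "HOL-Analysis.Analysis" "HOL-Combinatorics.Transposition"
begin

text \<open>Real power r^b with rational exponent b, for r \<ge> 0, using the convention 0^0 = 1
  (only used where the monomial is defined, i.e. r > 0 or b \<ge> 0).\<close>
definition qpow :: "real \<Rightarrow> rat \<Rightarrow> real" where
  "qpow r b = (if b = 0 then 1 else r powr (of_rat b))"

text \<open>Monomial polyhedron defined by B (rows b^j): z is in it iff every monomial
  prod_k |z_k|^(b^j_k) is defined (no z_k = 0 with b^j_k < 0) and is < 1.\<close>
definition monomial_polyhedron :: "rat^'n^'n \<Rightarrow> (complex^'n) set" where
  "monomial_polyhedron B =
     {z. \<forall>j. (\<forall>k. B$j$k < 0 \<longrightarrow> z$k \<noteq> 0) \<and>
              (\<Prod>k\<in>UNIV. qpow (norm (z$k)) (B$j$k)) < 1}"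

end

theory Submission
  imports Defs
begin

text \<open>Taking logarithms of the moduli turns the monomial polyhedron of B into the open
  cone of real vectors x with B x < 0 componentwise: every point of this cone is the log-modulus
  vector of a point of the polyhedron, and conversely a point of the polyhedron (with its zero
  coordinates sent to -M for large M) yields a point of the cone. Boundedness of the polyhedron
  forces the cone, which is closed under positive scaling, into the nonpositive orthant, hence
  also its closure, the set of x with B x \<le> 0. Applied to x = \<plusminus>v with B v = 0
  this gives injectivity of B, and applied to the columns of the negated inverse of B it gives
  nonnegativity of the inverse. Clearing denominators and, if necessary, swapping two rows then
  makes B integral with positive determinant without changing the polyhedron.\<close>

definition negative_cone :: "real^'n^'m \<Rightarrow> (real^'n) set" where
  "negative_cone A = {x. \<forall>j. (A *v x) $ j < 0}"

lemma weakly_negative_imp_nonpos: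
  fixes A :: "real^'n^'m"
  assumes x0: "x0 \<in> negative_cone A"
    and cone: "negative_cone A \<subseteq> {x. x \<le> 0}"
    and Ax: "A *v x \<le> 0"
  shows "x \<le> 0"
  unfolding less_eq_vec_def
proof
  fix k
  have "x $ k + t * x0 $ k \<le> 0" if "t > 0" for t
  proof -
    have "x + t *\<^sub>R x0 \<in> negative_cone A"
      using x0 Ax that
      by (auto simp: negative_cone_def matrix_vector_right_distrib matrix_vector_mult_scaleR
          less_eq_vec_def intro: add_nonpos_neg mult_pos_neg)
    with cone show ?thesis by (auto simp: less_eq_vec_def)
  qed
  then have "eventually (\<lambda>t. x $ k + t * x0 $ k \<le> 0) (at_right 0)"
    by (rule eventually_mono[OF eventually_at_right_less])
  moreover have "((\<lambda>t. x $ k + t * x0 $ k) \<longlongrightarrow> x $ k + 0 * x0 $ k) (at_right 0)"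
    by (intro tendsto_intros)
  ultimately show "x $ k \<le> 0 $ k"
    using tendsto_upperbound by fastforce
qed

lemma negative_cone_ker_trivial:
  fixes A :: "real^'n^'m"
  assumes "x0 \<in> negative_cone A" "negative_cone A \<subseteq> {x. x \<le> 0}" "A *v v = 0"
  shows "v = 0"
proof -
  have "A *v (- v) = - (A *v v)"
    by (simp add: matrix_vector_mult_def vec_eq_iff sum_negf)
  then have "v $ k \<le> 0 \<and> - v $ k \<le> 0" for k
    using weakly_negative_imp_nonpos[OF assms(1,2), of v]
      weakly_negative_imp_nonpos[OF assms(1,2), of "- v"]
    by (simp add: assms(3) less_eq_vec_def)
  then show ?thesis
    by (simp add: vec_eq_iff order.antisym)
qed

lemma negative_cone_right_inverse_nonneg:
  fixes A :: "real^'n^'m"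
  assumes "x0 \<in> negative_cone A" "negative_cone A \<subseteq> {x. x \<le> 0}" "A ** M = mat 1"
  shows "M $ i $ l \<ge> 0"
proof -
  have "A *v (M *v - axis l 1) = - axis l 1"
    using assms(3) by (simp add: matrix_vector_mul_assoc)
  then have "M *v - axis l 1 \<le> 0"
    by (intro weakly_negative_imp_nonpos[OF assms(1,2)]) (simp add: less_eq_vec_def axis_def)
  moreover have "(M *v - axis l 1) $ i = - M $ i $ l"
    by (simp add: matrix_vector_mult_def axis_def sum_negf if_distrib cong: if_cong)
  ultimately show ?thesis
    unfolding less_eq_vec_def by (metis neg_le_0_iff_le zero_index)
qed

lemma qpow_exp: "qpow (exp y) b = exp (of_rat b * y)"
  by (simp add: qpow_def powr_def)

lemma exp_vector_mem_monomial_polyhedron: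
  fixes B :: "rat^'n^'n"
  assumes "x \<in> negative_cone (map_matrix of_rat B)"
  shows "(\<chi> k. complex_of_real (exp (x $ k))) \<in> monomial_polyhedron B"
proof -
  have "(\<Prod>k\<in>UNIV. qpow (exp (x $ k)) (B $ j $ k)) < 1" for j
  proof -
    have "(\<Prod>k\<in>UNIV. qpow (exp (x $ k)) (B $ j $ k))
        = exp ((map_matrix of_rat B *v x) $ j)"
      by (simp add: qpow_exp exp_sum matrix_vector_mult_def)
    also have "\<dots> < 1"
      using assms by (simp add: negative_cone_def)
    finally show ?thesis .
  qed
  then show ?thesis
    unfolding monomial_polyhedron_def by simp
qed

lemma negative_cone_nonpos:
  fixes B :: "rat^'n^'n"
  assumes "bounded (monomial_polyhedron B)"
  shows "negative_cone (map_matrix of_rat B) \<subseteq> {x. x \<le> 0}"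
proof (clarsimp simp: less_eq_vec_def)
  fix x k
  assume x: "x \<in> negative_cone (map_matrix of_rat B)"
  show "x $ k \<le> 0"
  proof (rule ccontr)
    assume "\<not> x $ k \<le> 0"
    obtain R where R: "\<And>z. z \<in> monomial_polyhedron B \<Longrightarrow> norm z \<le> R"
      using assms unfolding bounded_iff by blast
    define t where "t = (\<bar>R\<bar> + 1) / x $ k"
    have tx: "t * x $ k = \<bar>R\<bar> + 1" "t > 0"
      using \<open>\<not> x $ k \<le> 0\<close> by (auto simp: t_def)
    have "t *\<^sub>R x \<in> negative_cone (map_matrix of_rat B)"
      using x tx(2) by (simp add: negative_cone_def matrix_vector_mult_scaleR mult_pos_neg)
    then have "norm (\<chi> k. complex_of_real (exp ((t *\<^sub>R x) $ k))) \<le> R"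
      by (intro R exp_vector_mem_monomial_polyhedron)
    then have "exp (t * x $ k) \<le> R"
      using Finite_Cartesian_Product.norm_nth_le[of "\<chi> k. complex_of_real (exp ((t *\<^sub>R x) $ k))" k]
      by simp
    moreover have "t * x $ k < exp (t * x $ k)"
      using exp_ge_add_one_self[of "t * x $ k"] by linarith
    ultimately show False
      using tx(1) by linarith
  qed
qed

text \<open>ln 0 = -\<infinity> is replaced by -M; this works for M large because a zero
  coordinate only meets nonnegative exponents.\<close>
definition log_norm_vector :: "real \<Rightarrow> complex^'n \<Rightarrow> real^'n" where
  "log_norm_vector M z = (\<chi> k. if z $ k = 0 then - M else ln (norm (z $ k)))"

lemma log_norm_vector_row_eventually_negative:
  fixes B :: "rat^'n^'n"
  assumes z: "z \<in> monomial_polyhedron B"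
  shows "\<forall>\<^sub>F M in at_top. (map_matrix of_rat B *v log_norm_vector M z) $ j < 0"
proof -
  define S where "S = (\<Sum>k \<in> - {k. z $ k = 0}. real_of_rat (B $ j $ k) * ln (norm (z $ k)))"
  define P where "P = (\<Sum>k \<in> {k. z $ k = 0}. real_of_rat (B $ j $ k))"
  have row: "(map_matrix of_rat B *v log_norm_vector M z) $ j = S - P * M" for M
    by (simp add: matrix_vector_mult_def log_norm_vector_def S_def P_def if_distrib
        sum.If_cases sum_negf flip: sum_distrib_right)
  have defined: "B $ j $ k < 0 \<Longrightarrow> z $ k \<noteq> 0" for k
    using z by (simp add: monomial_polyhedron_def)
  then have nonneg: "\<forall>k \<in> {k. z $ k = 0}. real_of_rat (B $ j $ k) \<ge> 0"
    by (auto simp: not_less[symmetric])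
  then have "P \<ge> 0"
    unfolding P_def by (intro sum_nonneg) auto
  moreover have "S < 0" if "P = 0"
  proof -
    have zero: "z $ k = 0 \<Longrightarrow> B $ j $ k = 0" for k
      using that nonneg unfolding P_def by (subst (asm) sum_nonneg_eq_0_iff) auto
    have "exp S = (\<Prod>k \<in> - {k. z $ k = 0}. qpow (norm (z $ k)) (B $ j $ k))"
      unfolding S_def by (simp add: exp_sum) (rule prod.cong, auto simp: qpow_def powr_def)
    also have "\<dots> = (\<Prod>k\<in>UNIV. qpow (norm (z $ k)) (B $ j $ k))"
      by (rule prod.mono_neutral_left) (auto simp: zero qpow_def)
    also have "\<dots> < 1"
      using z by (simp add: monomial_polyhedron_def)
    finally show ?thesis by simp
  qed
  ultimately have "\<forall>M \<ge> (\<bar>S\<bar> + 1) / P. S - P * M < 0"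
    by (cases "P = 0") (auto simp: field_simps)
  then show ?thesis
    unfolding row eventually_at_top_linorder by blast
qed

lemma negative_cone_nonempty:
  fixes B :: "rat^'n^'n"
  assumes "z \<in> monomial_polyhedron B"
  obtains x where "x \<in> negative_cone (map_matrix of_rat B)"
proof -
  have "\<forall>\<^sub>F M in at_top. \<forall>j. (map_matrix of_rat B *v log_norm_vector M z) $ j < 0"
    by (rule eventually_all_finite) (rule log_norm_vector_row_eventually_negative[OF assms])
  then obtain M where "\<forall>j. (map_matrix of_rat B *v log_norm_vector M z) $ j < 0"
    unfolding eventually_at_top_linorder by blast
  then have "log_norm_vector M z \<in> negative_cone (map_matrix of_rat B)"
    by (simp add: negative_cone_def)
  then show ?thesis
    by (rule that)
qed

lemma map_matrix_of_rat_mult: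
  fixes B :: "rat^'n^'m" and M :: "rat^'p^'n"
  shows "map_matrix of_rat (B ** M) = (map_matrix of_rat B ** map_matrix of_rat M :: real^'p^'m)"
  by (simp add: vec_eq_iff matrix_matrix_mult_def of_rat_sum of_rat_mult)

lemma map_matrix_of_rat_vector_mult:
  fixes B :: "rat^'n^'m"
  shows "map_matrix of_rat B *v (\<chi> k. of_rat (v $ k)) = (\<chi> j. real_of_rat ((B *v v) $ j))"
  by (simp add: vec_eq_iff matrix_vector_mult_def of_rat_sum of_rat_mult)

lemma matrix_inv_right:
  assumes "invertible A"
  shows "A ** matrix_inv A = mat 1"
  using assms unfolding invertible_def matrix_inv_def by (rule someI_ex[THEN conjunct1])

lemma bounded_monomial_polyhedron_inverse_nonneg:
  fixes B :: "rat^'n^'n"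
  assumes bounded: "bounded (monomial_polyhedron B)"
    and nonempty: "monomial_polyhedron B \<noteq> {}"
  shows "invertible B" "matrix_inv B $ j $ k \<ge> 0"
proof -
  obtain x0 where x0: "x0 \<in> negative_cone (map_matrix of_rat B)"
    using nonempty negative_cone_nonempty by blast
  note cone = x0 negative_cone_nonpos[OF bounded]
  have "v = 0" if "B *v v = 0" for v
  proof -
    have "map_matrix of_rat B *v (\<chi> k. real_of_rat (v $ k)) = 0"
      unfolding map_matrix_of_rat_vector_mult using that by (simp add: vec_eq_iff)
    then have "(\<chi> k. real_of_rat (v $ k)) = 0"
      using negative_cone_ker_trivial[OF cone] by blast
    then show "v = 0"
      by (simp add: vec_eq_iff)
  qed
  then show invertible: "invertible B"
    unfolding invertible_left_inverse using matrix_left_invertible_ker by blast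
  have "map_matrix of_rat B ** map_matrix of_rat (matrix_inv B) = (mat 1 :: real^'n^'n)"
    using matrix_inv_right[OF invertible]
    by (simp flip: map_matrix_of_rat_mult) (simp add: vec_eq_iff mat_def)
  from negative_cone_right_inverse_nonneg[OF cone this] show "matrix_inv B $ j $ k \<ge> 0"
    by simp
qed

lemma det_pos_if_inverse_nonneg_1x1:
  fixes B :: "'a::linordered_field^'n^'n"
  assumes "\<And>a b :: 'n. a = b" "invertible B" "\<And>j k. matrix_inv B $ j $ k \<ge> 0"
  shows "det B > 0"
proof -
  obtain i :: 'n where UNIV: "UNIV = {i}"
    using assms(1) by auto
  have "(B ** matrix_inv B) $ i $ i = 1"
    using matrix_inv_right[OF assms(2)] by (simp add: mat_def)
  then have "B $ i $ i * matrix_inv B $ i $ i = 1"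
    by (simp add: matrix_matrix_mult_def UNIV)
  then have "B $ i $ i > 0"
    using assms(3) by (metis mult_nonpos_nonneg not_le zero_less_one)
  moreover have "det B = B $ i $ i"
    using assms(1) by (subst det_diagonal) (auto simp: UNIV)
  ultimately show ?thesis by simp
qed

lemma qpow_mult_pos:
  assumes "r \<ge> 0" "c > 0"
  shows "qpow r (c * b) = qpow r b powr of_rat c"
  using assms by (auto simp: qpow_def powr_powr of_rat_mult mult.commute)

definition monomial_less_one :: "complex^'n \<Rightarrow> rat^'n \<Rightarrow> bool" where
  "monomial_less_one z b \<longleftrightarrow>
     (\<forall>k. b $ k < 0 \<longrightarrow> z $ k \<noteq> 0) \<and> (\<Prod>k\<in>UNIV. qpow (norm (z $ k)) (b $ k)) < 1"

lemma monomial_polyhedron_rows: "monomial_polyhedron B = {z. \<forall>j. monomial_less_one z (B $ j)}"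
  by (simp add: monomial_polyhedron_def monomial_less_one_def)

lemma powr_less_one_iff:
  fixes X c :: real
  assumes "X \<ge> 0" "c > 0"
  shows "X powr c < 1 \<longleftrightarrow> X < 1"
  using assms by (cases "X = 0") (auto simp: powr_def mult_less_0_iff)

lemma monomial_less_one_scale:
  assumes c: "c > 0"
  shows "monomial_less_one z (c *s b) \<longleftrightarrow> monomial_less_one z b"
proof -
  let ?X = "\<Prod>k\<in>UNIV. qpow (norm (z $ k)) (b $ k)"
  have "(\<Prod>k\<in>UNIV. qpow (norm (z $ k)) ((c *s b) $ k)) = ?X powr of_rat c"
    using c by (simp add: qpow_mult_pos prod_powr_distrib)
  moreover have "?X \<ge> 0"
    by (intro prod_nonneg) (simp add: qpow_def)
  moreover have "(c *s b) $ k < 0 \<longleftrightarrow> b $ k < 0" for k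
    using c by (simp add: mult_less_0_iff)
  ultimately show ?thesis
    using c unfolding monomial_less_one_def
    by (simp add: powr_less_one_iff del: vector_scalar_mult_def)
qed

lemma monomial_polyhedron_scale_permute_rows:
  fixes B :: "rat^'n^'n"
  assumes c: "\<And>j. c j > 0" and p: "p permutes UNIV"
  shows "monomial_polyhedron (\<chi> j. c j *s B $ p j) = monomial_polyhedron B"
proof -
  have "(\<forall>j. monomial_less_one z (B $ p j)) \<longleftrightarrow> (\<forall>j. monomial_less_one z (B $ j))" for z
    using p by (metis permutes_surj surj_def)
  then show ?thesis
    by (simp add: monomial_polyhedron_rows monomial_less_one_scale c)
qed

lemma common_denominator:
  fixes B :: "rat^'n^'m"
  obtains D :: int where "D > 0" "\<And>j k. of_int D * B $ j $ k \<in> \<int>"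
proof -
  define den where "den r = snd (quotient_of r)" for r :: rat
  have den_pos: "den r > 0" for r
    by (simp add: den_def quotient_of_denom_pos')
  have den_int: "of_int (den r) * r \<in> \<int>" for r
  proof -
    obtain a d where q: "quotient_of r = (a, d)"
      by (cases "quotient_of r")
    then have "of_int d * r = of_int a"
      using quotient_of_denom_pos[OF q] quotient_of_div[OF q] by simp
    then show ?thesis
      by (simp add: den_def q)
  qed
  define D where "D = (\<Prod>jk\<in>UNIV. den (B $ fst jk $ snd jk))"
  have "of_int D * B $ j $ k \<in> \<int>" for j k
  proof -
    have "D = den (B $ j $ k) * (\<Prod>jk\<in>UNIV - {(j, k)}. den (B $ fst jk $ snd jk))"
      unfolding D_def by (subst prod.remove[of UNIV "(j, k)"]) auto
    then have "of_int D * B $ j $ k = (of_int (den (B $ j $ k)) * B $ j $ k)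
        * of_int (\<Prod>jk\<in>UNIV - {(j, k)}. den (B $ fst jk $ snd jk))"
      by (simp add: algebra_simps)
    then show ?thesis
      using Ints_mult[OF den_int Ints_of_int] by (simp only:)
  qed
  moreover have "D > 0"
    unfolding D_def by (intro prod_pos) (simp add: den_pos)
  ultimately show ?thesis using that by blast
qed

lemma ex_transpose_rows_det_pos:
  fixes B :: "'a::linordered_idom^'n^'n"
  assumes "det B \<noteq> 0" "(\<And>a b :: 'n. a = b) \<Longrightarrow> det B > 0"
  obtains i1 i2 where "det (\<chi> j. B $ Transposition.transpose i1 i2 j) > 0"
proof (cases "det B > 0")
  case True
  then show ?thesis
    using that[of undefined undefined] by simp
next
  case False
  then obtain a b :: 'n where "a \<noteq> b"
    using assms(2) by blast
  then have "det (\<chi> j. B $ Transposition.transpose a b j) = - det B"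
    by (simp add: det_permute_rows permutes_swap_id sign_swap_id)
  then show ?thesis
    using that[of a b] False assms(1) by simp
qed

theorem proposition3p1:
  fixes B :: "rat^'n^'n"
  assumes "bounded (monomial_polyhedron B)"
    and "monomial_polyhedron B \<noteq> {}"
  shows "invertible B \<and>
    (\<exists>(c :: 'n \<Rightarrow> rat) (i1 :: 'n) (i2 :: 'n).
       (\<forall>j. c j > 0) \<and>
       (let B' = (\<chi> j. c j *s B $ (Transposition.transpose i1 i2 j)) in
          monomial_polyhedron B' = monomial_polyhedron B \<and>
          (\<forall>j k. B'$j$k \<in> \<int>) \<and>
          det B' > 0 \<and>
          invertible B' \<and>
          (\<forall>j k. matrix_inv B' $ j $ k \<ge> 0)))"
proof -
  note inverse_nonneg = bounded_monomial_polyhedron_inverse_nonneg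
  have "det B \<noteq> 0"
    using inverse_nonneg(1)[OF assms] invertible_det_nz by blast
  moreover have "det B > 0" if "\<And>a b :: 'n. a = b"
    using det_pos_if_inverse_nonneg_1x1[OF that inverse_nonneg[OF assms]] .
  ultimately obtain i1 i2 where det_pos: "det (\<chi> j. B $ Transposition.transpose i1 i2 j) > 0"
    by (rule ex_transpose_rows_det_pos)
  obtain D :: int where D: "D > 0" "\<And>j k. of_int D * B $ j $ k \<in> \<int>"
    using common_denominator by blast
  define B' where "B' = (\<chi> j. (of_int D :: rat) *s B $ Transposition.transpose i1 i2 j)"
  have same: "monomial_polyhedron B' = monomial_polyhedron B"
    unfolding B'_def using D(1) by (intro monomial_polyhedron_scale_permute_rows permutes_swap_id) auto
  have "det B' = of_int D ^ CARD('n) * det (\<chi> j. B $ Transposition.transpose i1 i2 j)"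
    unfolding B'_def using det_rows_mul[of "\<lambda>_. of_int D" "\<lambda>j. B $ Transposition.transpose i1 i2 j"]
    by simp
  with det_pos D(1) have "det B' > 0"
    by simp
  moreover have "invertible B'" "\<And>j k. matrix_inv B' $ j $ k \<ge> 0"
    using inverse_nonneg[of B'] assms unfolding same by auto
  moreover have "\<forall>j k. B' $ j $ k \<in> \<int>"
    using D(2) by (simp add: B'_def)
  ultimately show ?thesis
    using inverse_nonneg(1)[OF assms] same D(1) unfolding Let_def B'_def
    by (intro conjI exI[of _ "\<lambda>_. of_int D"] exI[of _ i1] exI[of _ i2]) auto
qed

end
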